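(* Let $\pi/2\le\alpha<\pi$ and $\Omega_\alpha=\{w:\ \frac{\alpha-\pi}{2\sin\alpha}<\mathrm{Re}\,w<\frac{\alpha}{2\sin\alpha}\}$. Let $f=h+\overline{g}\in\mathcal{S}_H^0$ map $\mathbb{D}$ onto $\Omega_\alpha$, with dilatation $\omega=g'/h'=b^2$ where $b(z)=\varepsilon z$, $\varepsilon\in\{1,-1\}$. Let $S$ be the minimal surface over $\Omega_\alpha$ with projection $f$, i.e. $S=\{(u(z),v(z),F(z)):z\in\mathbb{D}\}$ with $u=\mathrm{Re}\,f$, $v=\mathrm{Im}\,f$, $F(z)=\mathrm{Re}\int_0^z2ib(t)h'(t)\,dt+c$, $c\in\mathbb{R}$. Then $$u=\frac{1}{2\sin\alpha}\mathrm{Im}\left[\log\left(\frac{1+ze^{i\alpha}}{1+ze^{-i\alpha}}\right)\right],$$ $$v=\begin{cases}\mathrm{Im}\left(\dfrac{z}{z^2+1}\right)&\text{if }\alpha=\pi/2,\\[2mm] \dfrac{1}{2\cos\alpha}\mathrm{Im}\left[\log\left(\dfrac{(1+ze^{i\alpha})(1+ze^{-i\alpha})}{z^2+1}\right)\right]&\text{if }\pi/2<\alpha<\pi,\end{cases}$$ $$F=\begin{cases}\pm\mathrm{Im}\left(\dfrac{1}{z^2+1}\right)+c&\text{if }\alpha=\pi/2,\\[2mm] \pm\mathrm{Re}\left[\dfrac{1}{2\cos\alpha}\log\left(\dfrac{z+i}{z-i}\right)-\dfrac{1}{\sin2\alpha}\log\left(\dfrac{z+e^{i\alpha}}{z+e^{-i\alpha}}\right)\right]+c&\text{if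 }\pi/2<\alpha<\pi,\end{cases}$$ where the sign $\pm$ corresponds to $\varepsilon$ and $c$ is a real constant.
   Context: $\mathbb{D}$ is the unit disk. A harmonic mapping $f=h+\overline g$ ($h,g$ analytic on $\mathbb{D}$) is sense-preserving if $h'\ne0$ and its dilatation $\omega=g'/h'$ satisfies $|\omega|<1$. $\mathcal{S}_H^0$ is the class of sense-preserving univalent harmonic mappings $f=h+\overline g$ on $\mathbb{D}$ with $h(0)=g(0)=0$, $h'(0)=1$, $g'(0)=0$. Minimal surface with projection $f$ (Weierstrass–Enneper): $S=\{(\mathrm{Re}\int_0^z\phi_1+c_1,\mathrm{Re}\int_0^z\phi_2+c_2,\mathrm{Re}\int_0^z\phi_3+c_3)\}$ with $\phi_j$ analytic, $\phi_1^2+\phi_2^2+\phi_3^2=0$, $f=\mathrm{Re}\int_0^z\phi_1+i\,\mathrm{Re}\int_0^z\phi_2$ univalent sense-preserving harmonic onto the domain; for $\omega=b^2$, $b(z)=\pm z$, one has $\phi_1=h'+g'$, $\phi_2=-i(h'-g')$, $\phi_3=2ibh'$. Logarithms denote analytic branches on $\mathbb{D}$. *)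

theory Defs
  imports "HOL-Complex_Analysis.Complex_Analysis"
begin

definition sense_preserving_harm :: "(complex \<Rightarrow> complex) \<Rightarrow> (complex \<Rightarrow> complex) \<Rightarrow> bool" where
  "sense_preserving_harm h g \<longleftrightarrow>
     (\<forall>z\<in>ball 0 1. deriv h z \<noteq> 0 \<and> norm (deriv g z / deriv h z) < 1)"

definition in_SH0 :: "(complex \<Rightarrow> complex) \<Rightarrow> (complex \<Rightarrow> complex) \<Rightarrow> bool" where
  "in_SH0 h g \<longleftrightarrow>
     h holomorphic_on ball 0 1 \<and> g holomorphic_on ball 0 1 \<and>
     h 0 = 0 \<and> g 0 = 0 \<and> deriv h 0 = 1 \<and> deriv g 0 = 0 \<and>
     sense_preserving_harm h g \<and>
     inj_on (\<lambda>z. h z + cnj (g z)) (ball 0 1)"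

definition Omega :: "real \<Rightarrow> complex set" where
  "Omega \<alpha> = {w. (\<alpha> - pi) / (2 * sin \<alpha>) < Re w \<and> Re w < \<alpha> / (2 * sin \<alpha>)}"

end

theory Submission
  imports Defs
begin

text \<open>Put \<psi> = h + g, so that Re \<psi> = Re f and \<psi> maps the disk into the strip \<Omega>_\<alpha>.
  The map w \<mapsto> e^{2i w sin \<alpha>} followed by the Moebius map E \<mapsto> (E - 1) / (e^{i\<alpha>} - E e^{-i\<alpha>})
  sends the strip into the unit disk; since \<psi>(0) = 0 and \<psi>'(0) = 1 the composite is a Schwarz
  function with derivative 1 at the origin, hence the identity. This determines \<psi> and gives
  \<psi>' = 1 / ((1 + z e^{i\<alpha>})(1 + z e^{-i\<alpha>})). The dilatation z^2 then yields h' = \<psi>' / (1 + z^2) and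
  g' = z^2 h', and the formulas for Im f = Im (h - g) and for the height F follow by exhibiting
  explicit primitives of h' - g' and 2 i \<epsilon> z h' and comparing derivatives.\<close>

lemma exp_i_sub_exp_neg_i:
  "exp (\<i> * of_real a) - exp (- \<i> * of_real a) = 2 * \<i> * of_real (sin a)"
  by (simp add: complex_eq_iff exp_eq_polar cis.code)

lemma exp_i_mult_exp_neg_i: "exp (\<i> * of_real a) * exp (- \<i> * of_real a) = 1"
  by (simp flip: exp_add)

lemma one_plus_mult_exp_product:
  "(1 + z * exp (\<i> * of_real a)) * (1 + z * exp (- \<i> * of_real a)) = 1 + 2 * of_real (cos a) * z + z^2"
proof -
  have "exp (\<i> * of_real a) + exp (- \<i> * of_real a) = 2 * of_real (cos a)"
    by (simp add: complex_eq_iff exp_eq_polar cis.code)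
  then show ?thesis
    using exp_i_mult_exp_neg_i[of a] by (simp add: algebra_simps power2_eq_square) (metis distrib_left)
qed

lemma Re_one_plus_mult_pos:
  fixes z k :: complex
  assumes "norm z < 1" "norm k = 1"
  shows "Re (1 + z * k) > 0"
proof -
  have "\<bar>Re (z * k)\<bar> \<le> norm z"
    using abs_Re_le_cmod[of "z * k"] assms(2) by (simp add: norm_mult)
  then show ?thesis using assms(1) by auto
qed

lemma one_plus_mult_nonzero:
  fixes z k :: complex
  assumes "norm z < 1" "norm k = 1"
  shows "1 + z * k \<noteq> 0"
  using Re_one_plus_mult_pos[OF assms] by (metis less_irrefl zero_complex.sel(1))

lemma power2_plus_one_nonzero:
  fixes z :: complex
  assumes "norm z < 1"
  shows "z^2 + 1 \<noteq> 0"
proof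
  assume "z^2 + 1 = 0"
  then have "z^2 = -1" by (simp add: eq_neg_iff_add_eq_0)
  then have "norm (z^2) = 1" by simp
  then have "norm z = 1" using norm_ge_zero[of z] by (auto simp: norm_power power2_eq_1_iff)
  then show False using assms by simp
qed

lemma norm_polar_sub_cis_power2:
  "(norm (of_real r * cis \<theta> - cis \<beta>))^2 = r^2 - 2 * r * cos (\<theta> - \<beta>) + 1"
proof -
  have "cis \<beta> * cis (\<theta> - \<beta>) = cis \<theta>" by (simp add: cis_mult)
  then have "of_real r * cis \<theta> - cis \<beta> = cis \<beta> * (of_real r * cis (\<theta> - \<beta>) - 1)"
    by (simp add: algebra_simps)
  then have "(norm (of_real r * cis \<theta> - cis \<beta>))^2 = (r * cos (\<theta> - \<beta>) - 1)^2 + (r * sin (\<theta> - \<beta>))^2"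
    by (simp add: norm_mult cmod_power2)
  also have "\<dots> = r^2 * ((cos (\<theta> - \<beta>))^2 + (sin (\<theta> - \<beta>))^2) - 2 * r * cos (\<theta> - \<beta>) + 1"
    by (simp add: power2_eq_square algebra_simps del: sin_cos_squared_add sin_cos_squared_add2 sin_cos_squared_add3)
  finally show ?thesis by simp
qed

lemma norm_sub_one_less_norm_sub_cis_double:
  assumes "0 < \<alpha>" "\<alpha> < pi" "\<alpha> - pi < \<theta>" "\<theta> < \<alpha>" "r > 0"
  shows "norm (of_real r * cis \<theta> - 1) < norm (of_real r * cis \<theta> - cis (2 * \<alpha>))"
proof -
  have half_sums: "(\<theta> + (\<theta> - 2 * \<alpha>)) / 2 = \<theta> - \<alpha>" "((\<theta> - 2 * \<alpha>) - \<theta>) / 2 = - \<alpha>"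
    by simp_all
  have "cos \<theta> - cos (\<theta> - 2 * \<alpha>) = 2 * sin (\<theta> - \<alpha>) * sin (- \<alpha>)"
    using cos_diff_cos[of \<theta> "\<theta> - 2 * \<alpha>", unfolded half_sums] .
  also have "\<dots> = 2 * sin \<alpha> * sin (\<alpha> - \<theta>)"
    using sin_minus[of "\<theta> - \<alpha>"] by simp
  finally have "cos \<theta> - cos (\<theta> - 2 * \<alpha>) = 2 * sin \<alpha> * sin (\<alpha> - \<theta>)" .
  moreover have "sin \<alpha> > 0" "sin (\<alpha> - \<theta>) > 0"
    using assms by (auto intro: sin_gt_zero)
  ultimately have "cos (\<theta> - 2 * \<alpha>) < cos \<theta>"
    by (smt (verit) mult_pos_pos)
  then have "(norm (of_real r * cis \<theta> - cis 0))^2 < (norm (of_real r * cis \<theta> - cis (2 * \<alpha>)))^2"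
    unfolding norm_polar_sub_cis_power2 using assms(5) by simp
  then show ?thesis
    by (simp add: power2_less_imp_less)
qed

lemma norm_exp_strip_sub_one_less:
  assumes "0 < \<alpha>" "\<alpha> < pi" "w \<in> Omega \<alpha>"
  shows "norm (exp (2 * \<i> * of_real (sin \<alpha>) * w) - 1)
       < norm (exp (\<i> * of_real \<alpha>) - exp (2 * \<i> * of_real (sin \<alpha>) * w) * exp (- \<i> * of_real \<alpha>))"
proof -
  define E where "E = exp (2 * \<i> * of_real (sin \<alpha>) * w)"
  have s: "sin \<alpha> > 0" using assms by (intro sin_gt_zero) auto
  have E_polar: "E = of_real (exp (- 2 * sin \<alpha> * Im w)) * cis (2 * sin \<alpha> * Re w)"
    unfolding E_def by (subst exp_eq_polar) simp
  have "\<alpha> - pi < 2 * sin \<alpha> * Re w" "2 * sin \<alpha> * Re w < \<alpha>"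
    using assms(3) s unfolding Omega_def by (auto simp: field_simps)
  then have "norm (E - 1) < norm (E - cis (2 * \<alpha>))"
    unfolding E_polar using assms by (intro norm_sub_one_less_norm_sub_cis_double) auto
  also have "E - cis (2 * \<alpha>) = - exp (\<i> * of_real \<alpha>) * (exp (\<i> * of_real \<alpha>) - E * exp (- \<i> * of_real \<alpha>))"
  proof -
    have "exp (\<i> * of_real \<alpha>) * exp (\<i> * of_real \<alpha>) = cis (2 * \<alpha>)"
      by (simp add: cis_conv_exp mult_exp_exp ac_simps)
    then show ?thesis
      using exp_i_mult_exp_neg_i[of \<alpha>] by (simp add: algebra_simps)
  qed
  finally show ?thesis
    unfolding E_def by (simp add: norm_mult)
qed

lemma exp_strip_map_identity:
  assumes "0 < \<alpha>" "\<alpha> < pi"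
    and hol: "\<psi> holomorphic_on ball 0 1" and "\<psi> 0 = 0" "deriv \<psi> 0 = 1"
    and img: "\<psi> ` ball 0 1 \<subseteq> Omega \<alpha>"
    and z: "z \<in> ball 0 1"
  shows "exp (2 * \<i> * of_real (sin \<alpha>) * \<psi> z) * (1 + z * exp (- \<i> * of_real \<alpha>))
       = 1 + z * exp (\<i> * of_real \<alpha>)"
proof -
  define ea where "ea = exp (\<i> * of_real \<alpha>)"
  define eb where "eb = exp (- \<i> * of_real \<alpha>)"
  define s where "s = sin \<alpha>"
  define E where "E = (\<lambda>z. exp (2 * \<i> * of_real s * \<psi> z))"
  define T where "T = (\<lambda>z. (E z - 1) / (ea - E z * eb))"
  have lt: "norm (E w - 1) < norm (ea - E w * eb)" if "w \<in> ball 0 1" for w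
  proof -
    have "\<psi> w \<in> Omega \<alpha>" using img that by blast
    then show ?thesis
      unfolding E_def ea_def eb_def s_def by (rule norm_exp_strip_sub_one_less[OF assms(1,2)])
  qed
  then have den: "ea - E w * eb \<noteq> 0" if "w \<in> ball 0 1" for w
    using that by fastforce
  have "T holomorphic_on ball 0 1"
    using den unfolding T_def E_def by (intro holomorphic_intros hol) auto
  moreover have "T 0 = 0"
    unfolding T_def E_def by (simp add: assms(4))
  moreover have "norm (T w) < 1" if "norm w < 1" for w
    using lt[of w] den[of w] that unfolding T_def by (simp add: norm_divide divide_less_eq)
  moreover have T_deriv: "(T has_field_derivative 1) (at 0)"
  proof -
    have "s \<noteq> 0" unfolding s_def using assms(1,2) sin_gt_zero by fastforce
    have eab: "ea - eb = 2 * \<i> * of_real s"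
      unfolding ea_def eb_def s_def by (rule exp_i_sub_exp_neg_i)
    have E0: "E 0 = 1" unfolding E_def by (simp add: assms(4))
    have "(\<psi> has_field_derivative 1) (at 0)"
      using hol assms(5) by (metis centre_in_ball holomorphic_derivI open_ball zero_less_one)
    then have dE: "(E has_field_derivative 2 * \<i> * of_real s) (at 0)"
      unfolding E_def by (auto intro!: derivative_eq_intros simp: assms(4))
    have "((\<lambda>w. E w - 1) has_field_derivative 2 * \<i> * of_real s) (at 0)"
      using dE by (auto intro!: derivative_eq_intros)
    moreover have "((\<lambda>w. ea - E w * eb) has_field_derivative - (2 * \<i> * of_real s * eb)) (at 0)"
      using dE by (auto intro!: derivative_eq_intros)
    ultimately have "(T has_field_derivative (2 * \<i> * of_real s * (ea - E 0 * eb) + (E 0 - 1) * (2 * \<i> * of_real s * eb))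
        / ((ea - E 0 * eb) * (ea - E 0 * eb))) (at 0)"
      unfolding T_def using DERIV_divide den[of 0] by fastforce
    then show ?thesis
      using \<open>s \<noteq> 0\<close> by (simp add: E0 eab)
  qed
  ultimately obtain \<beta> where \<beta>: "\<forall>w. norm w < 1 \<longrightarrow> T w = \<beta> * w"
    using Schwarz_Lemma(3)[of T 0] DERIV_imp_deriv by fastforce
  have "((\<lambda>w. \<beta> * w) has_field_derivative 1) (at 0)"
    using T_deriv by (rule has_field_derivative_transform_within_open[of _ _ _ "ball 0 1"]) (use \<beta> in auto)
  then have "\<beta> = 1"
    using DERIV_unique DERIV_cmult_Id by blast
  with \<beta> z have "T z = z" by simp
  then have "E z - 1 = z * (ea - E z * eb)"
    using den[OF z] unfolding T_def by (simp add: divide_eq_eq)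
  then show ?thesis
    unfolding E_def ea_def eb_def s_def by (simp add: algebra_simps)
qed

lemma Re_eq_Im_Ln_of_exp_strip_identity:
  assumes "0 < \<alpha>" "\<alpha> < pi" "w \<in> Omega \<alpha>" "norm z < 1"
    and ident: "exp (2 * \<i> * of_real (sin \<alpha>) * w) * (1 + z * exp (- \<i> * of_real \<alpha>))
                = 1 + z * exp (\<i> * of_real \<alpha>)"
  shows "Re w = 1 / (2 * sin \<alpha>) * Im (Ln ((1 + z * exp (\<i> * of_real \<alpha>)) / (1 + z * exp (- \<i> * of_real \<alpha>))))"
proof -
  define Q where "Q = (1 + z * exp (\<i> * of_real \<alpha>)) / (1 + z * exp (- \<i> * of_real \<alpha>))"
  have s: "sin \<alpha> > 0" using assms by (intro sin_gt_zero) auto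
  have Q: "Q \<noteq> 0"
    unfolding Q_def using one_plus_mult_nonzero assms(4) by simp
  have "exp (2 * \<i> * of_real (sin \<alpha>) * w) = exp (Ln Q)"
    using ident one_plus_mult_nonzero[OF assms(4)] Q unfolding Q_def by (simp add: field_simps)
  then obtain n :: int where "2 * \<i> * of_real (sin \<alpha>) * w = Ln Q + of_int (2 * n) * pi * \<i>"
    by (auto simp: exp_eq)
  then have "Im (2 * \<i> * of_real (sin \<alpha>) * w) = Im (Ln Q + of_int (2 * n) * pi * \<i>)"
    by simp
  then have n: "2 * sin \<alpha> * Re w = Im (Ln Q) + 2 * pi * of_int n"
    by simp
  have "\<alpha> - pi < 2 * sin \<alpha> * Re w" "2 * sin \<alpha> * Re w < \<alpha>"
    using assms(3) s unfolding Omega_def by (auto simp: field_simps)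
  moreover have "- pi < Im (Ln Q)" "Im (Ln Q) \<le> pi"
    using mpi_less_Im_Ln[OF Q] Im_Ln_le_pi[OF Q] by auto
  ultimately have "2 * pi * (- 1) < 2 * pi * real_of_int n" "2 * pi * real_of_int n < 2 * pi * 1"
    using n assms(1,2) by linarith+
  moreover have "0 < 2 * pi" by simp
  ultimately have "- 1 < real_of_int n" "real_of_int n < 1"
    by (simp_all only: mult_less_cancel_left_pos)
  then have "n = 0"
    by linarith
  then show ?thesis
    using n s unfolding Q_def by (simp add: field_simps)
qed

lemma deriv_eq_of_exp_strip_identity:
  assumes "sin \<alpha> \<noteq> 0" and hol: "\<psi> holomorphic_on ball 0 1"
    and ident: "\<And>w. w \<in> ball 0 1 \<Longrightarrow>
      exp (2 * \<i> * of_real (sin \<alpha>) * \<psi> w) * (1 + w * exp (- \<i> * of_real \<alpha>)) = 1 + w * exp (\<i> * of_real \<alpha>)"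
    and z: "z \<in> ball 0 1"
  shows "deriv \<psi> z = 1 / ((1 + z * exp (\<i> * of_real \<alpha>)) * (1 + z * exp (- \<i> * of_real \<alpha>)))"
proof -
  define ea where "ea = exp (\<i> * of_real \<alpha>)"
  define eb where "eb = exp (- \<i> * of_real \<alpha>)"
  define c where "c = 2 * \<i> * of_real (sin \<alpha>)"
  have c: "c \<noteq> 0" "ea - eb = c"
    unfolding c_def ea_def eb_def using assms(1) exp_i_sub_exp_neg_i by auto
  have nz: "1 + w * eb \<noteq> 0" "1 + w * ea \<noteq> 0" if "w \<in> ball 0 1" for w
    using one_plus_mult_nonzero that unfolding ea_def eb_def by auto
  have quot: "exp (c * \<psi> w) = (1 + w * ea) / (1 + w * eb)" if "w \<in> ball 0 1" for w
    using ident[OF that] nz[OF that] unfolding ea_def eb_def c_def by (simp add: field_simps)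
  have alg: "c / B^2 = c * (1 / (A * B)) * (A / B)" if "A \<noteq> 0" "B \<noteq> 0" for A B :: complex
    using that by (simp add: field_simps power2_eq_square)
  have "((\<lambda>w. exp (c * \<psi> w)) has_field_derivative c * deriv \<psi> z * exp (c * \<psi> z)) (at z)"
    using holomorphic_derivI[OF hol open_ball z]
    by (auto intro!: derivative_eq_intros simp: algebra_simps)
  then have "((\<lambda>w. exp (c * \<psi> w)) has_field_derivative c * deriv \<psi> z * ((1 + z * ea) / (1 + z * eb))) (at z)"
    by (simp only: quot[OF z])
  then have "((\<lambda>w. (1 + w * ea) / (1 + w * eb)) has_field_derivative
          c * deriv \<psi> z * ((1 + z * ea) / (1 + z * eb))) (at z)"
    by (rule has_field_derivative_transform_within_open[OF _ open_ball z]) (simp add: quot)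
  moreover have "((\<lambda>w. (1 + w * ea) / (1 + w * eb)) has_field_derivative c / (1 + z * eb)^2) (at z)"
    using nz[OF z] c(2) by (auto intro!: derivative_eq_intros simp: field_simps power2_eq_square)
  ultimately have "c * deriv \<psi> z * ((1 + z * ea) / (1 + z * eb)) = c / (1 + z * eb)^2"
    by (rule DERIV_unique)
  also have "\<dots> = c * (1 / ((1 + z * ea) * (1 + z * eb))) * ((1 + z * ea) / (1 + z * eb))"
    using nz[OF z] by (simp add: alg)
  finally show ?thesis
    using nz[OF z] c(1) unfolding ea_def eb_def by (simp only: mult_right_cancel mult_left_cancel divide_eq_0_iff de_Morgan_disj not_False_eq_True simp_thms)
qed

lemma contour_integral_linepath_primitive:
  fixes S :: "complex set"
  assumes "convex S" "0 \<in> S" "z \<in> S"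
    and "\<And>t. t \<in> S \<Longrightarrow> (H has_field_derivative f t) (at t)"
  shows "contour_integral (linepath 0 z) f = H z - H 0"
proof -
  have "(f has_contour_integral (H z - H 0)) (linepath 0 z)"
    using contour_integral_primitive[of S H f "linepath 0 z"] assms
    by (auto simp: has_field_derivative_at_within closed_segment_subset)
  then show ?thesis
    by (rule contour_integral_unique)
qed

lemma eq_of_same_derivative_convex:
  fixes S :: "complex set"
  assumes "convex S" "0 \<in> S" "z \<in> S"
    and "\<And>t. t \<in> S \<Longrightarrow> (K has_field_derivative f t) (at t)"
    and "\<And>t. t \<in> S \<Longrightarrow> (G has_field_derivative f t) (at t)"
    and "K 0 = G 0"
  shows "K z = G z"
  using contour_integral_linepath_primitive[of S z K f] contour_integral_linepath_primitive[of S z G f] assms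
  by simp

lemma has_field_derivative_Ln_one_plus_mult:
  fixes w k :: complex
  assumes "norm w < 1" "norm k = 1"
  shows "((\<lambda>t. Ln (1 + t * k)) has_field_derivative k / (1 + w * k)) (at w)"
proof -
  have "1 + w * k \<notin> \<real>\<^sub>\<le>\<^sub>0"
    using Re_one_plus_mult_pos[OF assms] by (auto simp: complex_nonpos_Reals_iff)
  then have "((\<lambda>t. Ln (1 + t * k)) has_field_derivative inverse (1 + w * k) * k) (at w)"
    by (auto intro!: derivative_eq_intros DERIV_chain2[OF has_field_derivative_Ln])
  then show ?thesis
    by (simp add: field_simps)
qed

text \<open>For real z in (-1, 1) the quotient lies in (-1/2, 1/2); for non-real z it is real only on the unit circle.\<close>
lemma real_div_power2_plus_one_lt_half:
  fixes z :: complex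
  assumes z: "norm z < 1" and q: "z / (z^2 + 1) = of_real q"
  shows "q < 1/2"
proof -
  define x y where "x = Re z" and "y = Im z"
  have xy: "x^2 + y^2 < 1"
    using z unfolding x_def y_def by (metis cmod_power2 norm_ge_zero one_power2 power_strict_mono zero_less_numeral)
  have zq: "z = of_real q * (z^2 + 1)"
    using q power2_plus_one_nonzero[OF z] by (simp add: field_simps)
  have "x = Re (of_real q * (z^2 + 1))" "y = Im (of_real q * (z^2 + 1))"
    unfolding x_def y_def by (rule arg_cong[OF zq])+
  moreover have "Re (of_real q * (z^2 + 1)) = q * (1 + x^2 - y^2)" "Im (of_real q * (z^2 + 1)) = q * (2 * x * y)"
    unfolding x_def y_def by (simp_all add: Re_power2 Im_power2)
  ultimately have re: "x = q * (1 + x^2 - y^2)" and im: "y = q * (2 * x * y)"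
    by simp_all
  show ?thesis
  proof (cases "y = 0")
    case True
    then have "x \<noteq> 1" using xy by auto
    then have "0 < (1 - x)^2" by simp
    then have "2 * x < 1 + x^2" by (simp add: power2_eq_square algebra_simps)
    then have "q * (1 + x^2) < 1/2 * (1 + x^2)" using re True by simp
    moreover have "0 < 1 + x^2" by (simp add: add_pos_nonneg)
    ultimately show ?thesis by (meson mult_less_cancel_right_pos)
  next
    case False
    then have "2 * q * x = 1" using im by (metis mult.assoc mult.commute mult_cancel_left2)
    then have "q * (x^2 + y^2) = q"
      using re by algebra
    moreover have "q \<noteq> 0" using \<open>2 * q * x = 1\<close> by auto
    ultimately show ?thesis using xy by simp
  qed
qed

lemma quadratic_quotient_notin_nonpos_Reals:
  fixes z :: complex
  assumes z: "norm z < 1" and c: "-1 \<le> c" "c < 0"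
  shows "(1 + 2 * of_real c * z + z^2) / (z^2 + 1) \<notin> \<real>\<^sub>\<le>\<^sub>0"
proof
  define w where "w = z / (z^2 + 1)"
  assume "(1 + 2 * of_real c * z + z^2) / (z^2 + 1) \<in> \<real>\<^sub>\<le>\<^sub>0"
  moreover have "(1 + 2 * of_real c * z + z^2) / (z^2 + 1) = 1 + 2 * of_real c * w"
    unfolding w_def using power2_plus_one_nonzero[OF z] by (simp add: field_simps)
  ultimately have "Im w = 0" "1 + 2 * c * Re w \<le> 0"
    using c by (auto simp: complex_nonpos_Reals_iff)
  moreover have "z / (z^2 + 1) = of_real (Re w)"
    using \<open>Im w = 0\<close> unfolding w_def by (simp add: complex_eq_iff)
  then have "Re w < 1/2"
    by (rule real_div_power2_plus_one_lt_half[OF z])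
  then have "c * (1/2) < c * Re w"
    by (rule mult_strict_left_mono_neg[OF _ c(2)])
  ultimately show False
    using c(1) by linarith
qed

lemma has_field_derivative_div_power2_plus_one:
  fixes w :: complex
  assumes "w^2 + 1 \<noteq> 0"
  shows "((\<lambda>z. z / (z^2 + 1)) has_field_derivative (1 - w^2) / ((1 + w^2) * (w^2 + 1))) (at w)"
proof -
  have "w * w + 1 \<noteq> 0" "1 + w * w \<noteq> 0"
    using assms by (simp_all add: power2_eq_square add.commute)
  then show ?thesis
    by (auto intro!: derivative_eq_intros simp: field_simps power2_eq_square)
qed

lemma has_field_derivative_Ln_quadratic_quotient:
  fixes w :: complex
  assumes w: "norm w < 1" and c: "-1 \<le> c" "c < 0"
  shows "((\<lambda>z. of_real (1 / (2 * c)) * Ln ((1 + 2 * of_real c * z + z^2) / (z^2 + 1)))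
           has_field_derivative (1 - w^2) / ((1 + 2 * of_real c * w + w^2) * (w^2 + 1))) (at w)"
proof -
  define P where "P = (\<lambda>z::complex. 1 + 2 * of_real c * z + z^2)"
  have C: "w^2 + 1 \<noteq> 0" "w * w + 1 \<noteq> 0"
    using power2_plus_one_nonzero[OF w] by (simp_all add: power2_eq_square)
  have slit: "P w / (w^2 + 1) \<notin> \<real>\<^sub>\<le>\<^sub>0"
    unfolding P_def by (rule quadratic_quotient_notin_nonpos_Reals[OF w c])
  then have "P w \<noteq> 0" by auto
  have dQ: "((\<lambda>z. P z / (z^2 + 1)) has_field_derivative 2 * of_real c * (1 - w^2) / (w^2 + 1)^2) (at w)"
    unfolding P_def using C by (auto intro!: derivative_eq_intros simp: field_simps power2_eq_square)
  have alg: "of_real (1 / (2 * c)) * (inverse (p / q) * (2 * of_real c * (1 - w^2) / q^2)) = (1 - w^2) / (p * q)"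
    if "p \<noteq> 0" "q \<noteq> 0" for p q :: complex
    using that c by (simp add: field_simps power2_eq_square)
  have "((\<lambda>z. of_real (1 / (2 * c)) * Ln (P z / (z^2 + 1))) has_field_derivative
      of_real (1 / (2 * c)) * (inverse (P w / (w^2 + 1)) * (2 * of_real c * (1 - w^2) / (w^2 + 1)^2))) (at w)"
    by (intro DERIV_cmult DERIV_chain2[OF has_field_derivative_Ln[OF slit] dQ])
  then show ?thesis
    unfolding alg[OF \<open>P w \<noteq> 0\<close> C(1)] unfolding P_def .
qed

lemma has_field_derivative_height_right_angle:
  fixes w :: complex
  assumes "w^2 + 1 \<noteq> 0"
  shows "((\<lambda>t. - \<i> * of_real \<epsilon> / (t^2 + 1)) has_field_derivative
           2 * \<i> * (of_real \<epsilon> * w) * (1 / ((1 + w^2) * (w^2 + 1)))) (at w)"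
proof -
  have "w * w + 1 \<noteq> 0" "1 + w * w \<noteq> 0"
    using assms by (simp_all add: power2_eq_square add.commute)
  then show ?thesis
    by (auto intro!: derivative_eq_intros simp: field_simps power2_eq_square)
qed

text \<open>The logarithms of (z + i)/(z - i) in the theorem are not holomorphic on the disk (the argument
  crosses the branch cut); each factor used here has positive real part there, and the real parts agree.\<close>
definition height_primitive :: "real \<Rightarrow> complex \<Rightarrow> complex" where
  "height_primitive \<alpha> t =
     of_real (- 1 / (2 * cos \<alpha>)) * (Ln (1 + t * (- \<i>)) - Ln (1 + t * \<i>))
     + of_real (1 / sin (2 * \<alpha>)) * (Ln (1 + t * exp (- \<i> * of_real \<alpha>)) - Ln (1 + t * exp (\<i> * of_real \<alpha>)))"

lemma has_field_derivative_height_primitive: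
  assumes "sin (2 * \<alpha>) \<noteq> 0" and w: "norm w < 1"
  shows "(height_primitive \<alpha> has_field_derivative
           2 * \<i> * w * (1 / ((1 + 2 * of_real (cos \<alpha>) * w + w^2) * (w^2 + 1)))) (at w)"
proof -
  define ea where "ea = exp (\<i> * of_real \<alpha>)"
  define eb where "eb = exp (- \<i> * of_real \<alpha>)"
  define P where "P = 1 + 2 * of_real (cos \<alpha>) * w + w^2"
  have sc: "sin \<alpha> \<noteq> 0" "cos \<alpha> \<noteq> 0"
    using assms(1) by (auto simp: sin_double)
  have units: "norm (- \<i>) = 1" "norm \<i> = 1" "norm ea = 1" "norm eb = 1"
    unfolding ea_def eb_def by simp_all
  have nz: "1 + w * (- \<i>) \<noteq> 0" "1 + w * \<i> \<noteq> 0" "1 + w * ea \<noteq> 0" "1 + w * eb \<noteq> 0"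
    by (simp_all only: one_plus_mult_nonzero[OF w] units not_False_eq_True)
  have P: "(1 + w * ea) * (1 + w * eb) = P"
    unfolding P_def ea_def eb_def by (rule one_plus_mult_exp_product)
  then have "P \<noteq> 0"
    using nz(3,4) by auto
  have C: "w^2 + 1 \<noteq> 0"
    using power2_plus_one_nonzero[OF w] .
  have alg: "of_real (- 1 / (2 * cos \<alpha>)) * (- 2 * \<i> / q) + of_real (1 / sin (2 * \<alpha>)) * (- 2 * \<i> * of_real (sin \<alpha>) / p)
      = 2 * \<i> * w * (1 / (p * q))" if "p \<noteq> 0" "q \<noteq> 0" "p - q = 2 * of_real (cos \<alpha>) * w" for p q :: complex
  proof -
    have "of_real (- 1 / (2 * cos \<alpha>)) * (- 2 * \<i> / q) + of_real (1 / sin (2 * \<alpha>)) * (- 2 * \<i> * of_real (sin \<alpha>) / p)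
        = \<i> * (p - q) / (of_real (cos \<alpha>) * p * q)"
      unfolding sin_double using that(1,2) sc by (simp add: field_simps)
    also have "\<dots> = 2 * \<i> * w * (1 / (p * q))"
      unfolding that(3) using that(1,2) sc by (simp add: field_simps)
    finally show ?thesis .
  qed
  have deriv: "(height_primitive \<alpha> has_field_derivative
      of_real (- 1 / (2 * cos \<alpha>)) * ((- \<i>) / (1 + w * (- \<i>)) - \<i> / (1 + w * \<i>))
      + of_real (1 / sin (2 * \<alpha>)) * (eb / (1 + w * eb) - ea / (1 + w * ea))) (at w)"
    unfolding height_primitive_def ea_def eb_def
    by (intro DERIV_add DERIV_cmult DERIV_diff has_field_derivative_Ln_one_plus_mult w) simp_all
  have e1: "(- \<i>) / (1 + w * (- \<i>)) - \<i> / (1 + w * \<i>) = - 2 * \<i> / (w^2 + 1)"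
  proof -
    have den: "(1 + w * (- \<i>)) * (1 + w * \<i>) = w^2 + 1"
      by (simp add: algebra_simps power2_eq_square)
    have num: "(- \<i>) * (1 + w * \<i>) - \<i> * (1 + w * (- \<i>)) = - 2 * \<i>"
      by (simp add: algebra_simps)
    show ?thesis
      unfolding diff_frac_eq[OF nz(1,2)] den num ..
  qed
  have e2: "eb / (1 + w * eb) - ea / (1 + w * ea) = - 2 * \<i> * of_real (sin \<alpha>) / P"
  proof -
    have den: "(1 + w * eb) * (1 + w * ea) = P"
      using P by (simp add: mult.commute)
    have num: "eb * (1 + w * ea) - ea * (1 + w * eb) = - 2 * \<i> * of_real (sin \<alpha>)"
      using exp_i_sub_exp_neg_i[of \<alpha>] unfolding ea_def[symmetric] eb_def[symmetric] by (simp add: algebra_simps)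
    show ?thesis
      unfolding diff_frac_eq[OF nz(4,3)] den num ..
  qed
  have e3: "of_real (- 1 / (2 * cos \<alpha>)) * (- 2 * \<i> / (w^2 + 1)) + of_real (1 / sin (2 * \<alpha>)) * (- 2 * \<i> * of_real (sin \<alpha>) / P)
      = 2 * \<i> * w * (1 / (P * (w^2 + 1)))"
    by (rule alg[OF \<open>P \<noteq> 0\<close> C]) (simp add: P_def)
  from deriv show ?thesis
    unfolding e1 e2 e3 P_def[symmetric] .
qed

lemma Re_height_primitive:
  assumes z: "norm z < 1"
  shows "Re (height_primitive \<alpha> z) =
    - Re (of_real (1 / (2 * cos \<alpha>)) * Ln ((z + \<i>) / (z - \<i>))
          - of_real (1 / sin (2 * \<alpha>)) * Ln ((z + exp (\<i> * of_real \<alpha>)) / (z + exp (- \<i> * of_real \<alpha>))))"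
proof -
  define ea where "ea = exp (\<i> * of_real \<alpha>)"
  define eb where "eb = exp (- \<i> * of_real \<alpha>)"
  have units: "norm (- \<i>) = 1" "norm \<i> = 1" "norm ea = 1" "norm eb = 1"
    unfolding ea_def eb_def by simp_all
  have ne: "ea \<noteq> 0" "eb \<noteq> 0"
    unfolding ea_def eb_def by simp_all
  have nz: "1 + z * (- \<i>) \<noteq> 0" "1 + z * \<i> \<noteq> 0" "1 + z * ea \<noteq> 0" "1 + z * eb \<noteq> 0"
    by (simp_all only: one_plus_mult_nonzero[OF z] units not_False_eq_True)
  have "z + \<i> = \<i> * (1 + z * (- \<i>))" "z - \<i> = (- \<i>) * (1 + z * \<i>)"
    by (simp_all add: algebra_simps)
  then have R1: "Re (Ln ((z + \<i>) / (z - \<i>))) = ln (norm (1 + z * (- \<i>))) - ln (norm (1 + z * \<i>))"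
    using nz by (simp add: Re_Ln norm_divide norm_mult ln_div)
  have "z + ea = ea * (1 + z * eb)" "z + eb = eb * (1 + z * ea)"
    using exp_i_mult_exp_neg_i[of \<alpha>] unfolding ea_def[symmetric] eb_def[symmetric]
    by (simp_all add: algebra_simps)
  then have R2: "Re (Ln ((z + ea) / (z + eb))) = ln (norm (1 + z * eb)) - ln (norm (1 + z * ea))"
    using nz ne units by (simp add: Re_Ln norm_divide norm_mult ln_div)
  have Re_real_mult: "Re (of_real r * w) = r * Re w" for r w
    by simp
  show ?thesis
    unfolding height_primitive_def plus_complex.sel minus_complex.sel Re_real_mult
      ea_def[symmetric] eb_def[symmetric] R1 R2 Re_Ln[OF nz(1)] Re_Ln[OF nz(2)] Re_Ln[OF nz(3)] Re_Ln[OF nz(4)]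
    by (simp add: algebra_simps)
qed

lemma Im_harmonic_eq_of_deriv:
  assumes \<alpha>: "pi / 2 \<le> \<alpha>" "\<alpha> < pi"
    and hol: "h holomorphic_on ball 0 1" "g holomorphic_on ball 0 1" and "h 0 = 0" "g 0 = 0"
    and dg: "\<And>w. w \<in> ball 0 1 \<Longrightarrow> deriv g w = w^2 * deriv h w"
    and dh: "\<And>w. w \<in> ball 0 1 \<Longrightarrow> deriv h w = 1 / ((1 + 2 * of_real (cos \<alpha>) * w + w^2) * (w^2 + 1))"
    and z: "z \<in> ball 0 1"
  shows "Im (h z + cnj (g z)) =
    (if \<alpha> = pi / 2 then Im (z / (z ^ 2 + 1))
     else 1 / (2 * cos \<alpha>) *
       Im (Ln ((1 + z * exp (\<i> * of_real \<alpha>)) * (1 + z * exp (- \<i> * of_real \<alpha>)) / (z ^ 2 + 1))))"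
proof -
  have d: "((\<lambda>w. h w - g w) has_field_derivative
            (1 - t^2) / ((1 + 2 * of_real (cos \<alpha>) * t + t^2) * (t^2 + 1))) (at t)"
    if t: "t \<in> ball 0 1" for t
  proof -
    have "((\<lambda>w. h w - g w) has_field_derivative deriv h t - deriv g t) (at t)"
      using holomorphic_derivI[OF hol(1) open_ball t] holomorphic_derivI[OF hol(2) open_ball t]
      by (rule DERIV_diff)
    moreover have "deriv h t - deriv g t = (1 - t^2) * deriv h t"
      using dg[OF t] by (simp add: algebra_simps)
    ultimately show ?thesis
      using dh[OF t] by simp
  qed
  have eq: "h z - g z = K z"
    if "\<And>t. t \<in> ball 0 1 \<Longrightarrow> (K has_field_derivative
            (1 - t^2) / ((1 + 2 * of_real (cos \<alpha>) * t + t^2) * (t^2 + 1))) (at t)"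
    and "K 0 = 0" for K
    by (rule eq_of_same_derivative_convex[of "ball 0 1" z "\<lambda>w. h w - g w"
          "\<lambda>t. (1 - t^2) / ((1 + 2 * of_real (cos \<alpha>) * t + t^2) * (t^2 + 1))" K])
       (use d that z \<open>h 0 = 0\<close> \<open>g 0 = 0\<close> in auto)
  show ?thesis
  proof (cases "\<alpha> = pi / 2")
    case True
    have "cos \<alpha> = 0" unfolding True by simp
    have "h z - g z = z / (z^2 + 1)"
    proof (rule eq)
      fix t :: complex assume "t \<in> ball 0 1"
      then show "((\<lambda>z. z / (z^2 + 1)) has_field_derivative
          (1 - t^2) / ((1 + 2 * of_real (cos \<alpha>) * t + t^2) * (t^2 + 1))) (at t)"
        using has_field_derivative_div_power2_plus_one[OF power2_plus_one_nonzero] \<open>cos \<alpha> = 0\<close> by simp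
    qed simp
    then have "Im (h z - g z) = Im (z / (z^2 + 1))"
      by simp
    then show ?thesis
      using True by simp
  next
    case False
    then have c: "-1 \<le> cos \<alpha>" "cos \<alpha> < 0"
      using \<alpha> by (auto intro: cos_lt_zero_pi)
    have hg: "h z - g z = of_real (1 / (2 * cos \<alpha>)) * Ln ((1 + 2 * of_real (cos \<alpha>) * z + z^2) / (z^2 + 1))"
      using c by (intro eq has_field_derivative_Ln_quadratic_quotient) auto
    have "Im (h z + cnj (g z)) = Im (of_real (1 / (2 * cos \<alpha>)) * Ln ((1 + 2 * of_real (cos \<alpha>) * z + z^2) / (z^2 + 1)))"
      unfolding hg[symmetric] by simp
    then show ?thesis
      using False unfolding one_plus_mult_exp_product by simp
  qed
qed

lemma Re_contour_integral_height:
  assumes \<alpha>: "pi / 2 \<le> \<alpha>" "\<alpha> < pi"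
    and dh: "\<And>w. w \<in> ball 0 1 \<Longrightarrow> deriv h w = 1 / ((1 + 2 * of_real (cos \<alpha>) * w + w^2) * (w^2 + 1))"
    and z: "z \<in> ball 0 1"
  shows "Re (contour_integral (linepath 0 z) (\<lambda>t. 2 * \<i> * (complex_of_real \<epsilon> * t) * deriv h t)) =
    (if \<alpha> = pi / 2 then \<epsilon> * Im (1 / (z ^ 2 + 1))
     else - \<epsilon> * Re (of_real (1 / (2 * cos \<alpha>)) * Ln ((z + \<i>) / (z - \<i>))
                   - of_real (1 / sin (2 * \<alpha>)) * Ln ((z + exp (\<i> * of_real \<alpha>)) / (z + exp (- \<i> * of_real \<alpha>)))))"
proof (cases "\<alpha> = pi / 2")
  case True
  have "contour_integral (linepath 0 z) (\<lambda>t. 2 * \<i> * (complex_of_real \<epsilon> * t) * deriv h t)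
      = - \<i> * of_real \<epsilon> / (z^2 + 1) - (- \<i> * of_real \<epsilon> / (0^2 + 1))"
  proof (rule contour_integral_linepath_primitive[of "ball 0 1"])
    fix t :: complex assume t: "t \<in> ball 0 1"
    have "cos \<alpha> = 0" unfolding True by simp
    then have "deriv h t = 1 / ((1 + t^2) * (t^2 + 1))"
      using dh[OF t] by simp
    then show "((\<lambda>t. - \<i> * of_real \<epsilon> / (t^2 + 1)) has_field_derivative
        2 * \<i> * (complex_of_real \<epsilon> * t) * deriv h t) (at t)"
      using has_field_derivative_height_right_angle[OF power2_plus_one_nonzero] t by simp
  qed (use z in auto)
  then show ?thesis
    using True by (simp add: Re_divide Im_divide)
next
  case False
  have "sin \<alpha> > 0" "cos \<alpha> < 0"
    using \<alpha> False by (auto intro: sin_gt_zero cos_lt_zero_pi)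
  then have "sin (2 * \<alpha>) \<noteq> 0"
    by (simp add: sin_double)
  have "contour_integral (linepath 0 z) (\<lambda>t. 2 * \<i> * (complex_of_real \<epsilon> * t) * deriv h t)
      = of_real \<epsilon> * height_primitive \<alpha> z - of_real \<epsilon> * height_primitive \<alpha> 0"
  proof (rule contour_integral_linepath_primitive[of "ball 0 1"])
    fix t :: complex assume "t \<in> ball 0 1"
    then show "((\<lambda>t. of_real \<epsilon> * height_primitive \<alpha> t) has_field_derivative
        2 * \<i> * (complex_of_real \<epsilon> * t) * deriv h t) (at t)"
      using DERIV_cmult[OF has_field_derivative_height_primitive[OF \<open>sin (2 * \<alpha>) \<noteq> 0\<close>], of t "of_real \<epsilon>"] dh
      by (simp add: ac_simps)
  qed (use z in auto)
  moreover have "height_primitive \<alpha> 0 = 0"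
    by (simp add: height_primitive_def)
  ultimately have "Re (contour_integral (linepath 0 z) (\<lambda>t. 2 * \<i> * (complex_of_real \<epsilon> * t) * deriv h t))
      = \<epsilon> * Re (height_primitive \<alpha> z)"
    by simp
  moreover have "norm z < 1"
    using z by simp
  ultimately show ?thesis
    using False unfolding Re_height_primitive[OF \<open>norm z < 1\<close>] by (simp add: algebra_simps)
qed

lemma deriv_eq_of_dilatation_square:
  assumes "\<epsilon> \<in> {1, -1}" "deriv h z \<noteq> 0" "deriv g z / deriv h z = (complex_of_real \<epsilon> * z) ^ 2"
  shows "deriv g z = z^2 * deriv h z"
proof -
  have "(complex_of_real \<epsilon>)^2 = 1"
    using assms(1) by auto
  then show ?thesis
    using assms(2,3) by (simp add: divide_eq_eq power_mult_distrib)
qed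

lemma exp_strip_identity_of_SH0:
  assumes "0 < \<alpha>" "\<alpha> < pi" and SH0: "in_SH0 h g"
    and strip: "(\<lambda>z. h z + cnj (g z)) ` ball 0 1 \<subseteq> Omega \<alpha>"
    and z: "z \<in> ball 0 1"
  shows "exp (2 * \<i> * of_real (sin \<alpha>) * (h z + g z)) * (1 + z * exp (- \<i> * of_real \<alpha>))
       = 1 + z * exp (\<i> * of_real \<alpha>)"
proof -
  from SH0 have hol: "h holomorphic_on ball 0 1" "g holomorphic_on ball 0 1"
    and "h 0 = 0" "g 0 = 0" "deriv h 0 = 1" "deriv g 0 = 0"
    unfolding in_SH0_def by auto
  have "deriv (\<lambda>z. h z + g z) 0 = deriv h 0 + deriv g 0"
    using hol by (intro deriv_add holomorphic_on_imp_differentiable_at) auto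
  moreover have "(\<lambda>z. h z + g z) ` ball 0 1 \<subseteq> Omega \<alpha>"
  proof
    fix w assume "w \<in> (\<lambda>z. h z + g z) ` ball 0 1"
    then obtain z where z: "z \<in> ball 0 1" "w = h z + g z" by blast
    then have "h z + cnj (g z) \<in> Omega \<alpha>" using strip by blast
    then show "w \<in> Omega \<alpha>" using z unfolding Omega_def by simp
  qed
  ultimately show ?thesis
    using exp_strip_map_identity[OF assms(1,2), of "\<lambda>z. h z + g z"] hol z
      \<open>h 0 = 0\<close> \<open>g 0 = 0\<close> \<open>deriv h 0 = 1\<close> \<open>deriv g 0 = 0\<close>
    by (auto intro: holomorphic_intros)
qed

lemma deriv_h_eq_of_exp_strip_identity:
  assumes "sin \<alpha> \<noteq> 0" and hol: "h holomorphic_on ball 0 1" "g holomorphic_on ball 0 1"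
    and ident: "\<And>w. w \<in> ball 0 1 \<Longrightarrow>
      exp (2 * \<i> * of_real (sin \<alpha>) * (h w + g w)) * (1 + w * exp (- \<i> * of_real \<alpha>)) = 1 + w * exp (\<i> * of_real \<alpha>)"
    and dg: "deriv g z = z^2 * deriv h z"
    and z: "z \<in> ball 0 1"
  shows "deriv h z = 1 / ((1 + 2 * of_real (cos \<alpha>) * z + z^2) * (z^2 + 1))"
proof -
  have "deriv h z * (z^2 + 1) = deriv (\<lambda>w. h w + g w) z"
    using hol z dg by (subst deriv_add) (auto intro: holomorphic_on_imp_differentiable_at simp: algebra_simps)
  also have "\<dots> = 1 / (1 + 2 * of_real (cos \<alpha>) * z + z^2)"
    using deriv_eq_of_exp_strip_identity[OF assms(1) _ ident z] hol
    by (simp only: one_plus_mult_exp_product holomorphic_on_add)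
  finally have eq: "deriv h z * (z^2 + 1) = 1 / (1 + 2 * of_real (cos \<alpha>) * z + z^2)" .
  have "deriv h z = deriv h z * (z^2 + 1) / (z^2 + 1)"
    using power2_plus_one_nonzero z by simp
  also have "\<dots> = 1 / ((1 + 2 * of_real (cos \<alpha>) * z + z^2) * (z^2 + 1))"
    unfolding eq by simp
  finally show ?thesis .
qed

lemma Re_harmonic_eq_of_SH0:
  assumes "0 < \<alpha>" "\<alpha> < pi" "in_SH0 h g"
    and strip: "(\<lambda>z. h z + cnj (g z)) ` ball 0 1 \<subseteq> Omega \<alpha>"
    and z: "z \<in> ball 0 1"
  shows "Re (h z + cnj (g z)) =
    1 / (2 * sin \<alpha>) * Im (Ln ((1 + z * exp (\<i> * of_real \<alpha>)) / (1 + z * exp (- \<i> * of_real \<alpha>))))"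
proof -
  have "h z + cnj (g z) \<in> Omega \<alpha>"
    using strip z by blast
  then have "h z + g z \<in> Omega \<alpha>"
    unfolding Omega_def by simp
  then show ?thesis
    using Re_eq_Im_Ln_of_exp_strip_identity[OF assms(1,2) _ _ exp_strip_identity_of_SH0[OF assms]] z by simp
qed

theorem theorem3p2:
  fixes \<alpha> \<epsilon> c :: real and h g :: "complex \<Rightarrow> complex" and F :: "complex \<Rightarrow> real"
  assumes "pi / 2 \<le> \<alpha>" and "\<alpha> < pi"
    and "\<epsilon> \<in> {1, -1}"
    and "in_SH0 h g"
    and "(\<lambda>z. h z + cnj (g z)) ` ball 0 1 = Omega \<alpha>"
    and "\<forall>z\<in>ball 0 1. deriv g z / deriv h z = (complex_of_real \<epsilon> * z) ^ 2"
    and "\<forall>z\<in>ball 0 1. F z =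
           Re (contour_integral (linepath 0 z) (\<lambda>t. 2 * \<i> * (complex_of_real \<epsilon> * t) * deriv h t)) + c"
  shows "\<forall>z\<in>ball 0 1.
     Re (h z + cnj (g z)) =
       1 / (2 * sin \<alpha>) * Im (Ln ((1 + z * exp (\<i> * of_real \<alpha>)) / (1 + z * exp (- \<i> * of_real \<alpha>))))
   \<and> Im (h z + cnj (g z)) =
       (if \<alpha> = pi / 2 then Im (z / (z ^ 2 + 1))
        else 1 / (2 * cos \<alpha>) *
          Im (Ln ((1 + z * exp (\<i> * of_real \<alpha>)) * (1 + z * exp (- \<i> * of_real \<alpha>)) / (z ^ 2 + 1))))
   \<and> F z =
       (if \<alpha> = pi / 2 then \<epsilon> * Im (1 / (z ^ 2 + 1)) + c
        else - \<epsilon> * Re (of_real (1 / (2 * cos \<alpha>)) * Ln ((z + \<i>) / (z - \<i>))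
                       - of_real (1 / sin (2 * \<alpha>)) * Ln ((z + exp (\<i> * of_real \<alpha>)) / (z + exp (- \<i> * of_real \<alpha>))))
             + c)"
proof -
  have \<alpha>: "0 < \<alpha>" "sin \<alpha> \<noteq> 0"
    using assms(1,2) pi_gt_zero sin_gt_zero[of \<alpha>] by linarith+
  from assms(4) have hol: "h holomorphic_on ball 0 1" "g holomorphic_on ball 0 1"
    and "h 0 = 0" "g 0 = 0" and h'_nz: "\<And>z. z \<in> ball 0 1 \<Longrightarrow> deriv h z \<noteq> 0"
    unfolding in_SH0_def sense_preserving_harm_def by auto
  have strip: "(\<lambda>z. h z + cnj (g z)) ` ball 0 1 \<subseteq> Omega \<alpha>"
    using assms(5) by simp
  have dg: "deriv g z = z^2 * deriv h z" if "z \<in> ball 0 1" for z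
    using deriv_eq_of_dilatation_square[OF assms(3) h'_nz] assms(6) that by blast
  note dh = deriv_h_eq_of_exp_strip_identity[OF \<alpha>(2) hol exp_strip_identity_of_SH0[OF \<alpha>(1) assms(2,4) strip] dg]
  show ?thesis
    by (intro ballI conjI Re_harmonic_eq_of_SH0[OF \<alpha>(1) assms(2,4) strip]
          Im_harmonic_eq_of_deriv[OF assms(1,2) hol \<open>h 0 = 0\<close> \<open>g 0 = 0\<close> dg dh])
       (use assms(7) Re_contour_integral_height[OF assms(1,2) dh] in simp_all)
qed

end
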